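(* Let $c\ge 1$ be an integer and $\lambda,\mu,\alpha>0$ with $\rho:=\lambda/(c\mu)<1$. Let $(C,N)$ have the stationary distribution $(\pi_{i,j})$ of the continuous-time Markov chain on $\mathcal S=\{(i,j):0\le i\le c,\ j\ge i\}$ whose only transitions are: $(i,j)\to(i,j+1)$ at rate $\lambda$; $(i,j)\to(i+1,j)$ at rate $\min(j-i,c-i)\alpha$ for $i<c$, $j>i$; $(i,j)\to(i,j-1)$ at rate $i\mu$ for $i\ge1$, $j>i$; $(i,i)\to(i-1,i-1)$ at rate $i\mu$ for $i\ge 1$. Let $Q^{(c)}$ be a random variable with $\mathbb P(Q^{(c)}=k)=\mathbb P(N=c+k\mid C=c)$, $k\ge0$, and let $P_c(z)=\mathbb E[z^{Q^{(c)}}]$. Let $M=\sum_{k\ge1}k\,\pi_{c-1,c-1+k}$ and $p_{c-1,i}=\frac{1}{M}\sum_{k\ge i+1}\pi_{c-1,c-1+k}$ for $i\ge0$. Then $(p_{c-1,i})_{i\ge0}$ is a probability distribution and, for $|z|\le1$, $$P_c(z)=\left(\sum_{i=0}^\infty p_{c-1,i}z^i\right)\frac{1-\rho}{1-\rho z}.$$ Equivalently, $Q^{(c)}$ has the same distribution as $Q_{ON\text{-}IDLE}+Q_{Res}$, where $Q_{ON\text{-}IDLE}$ and $Q_{Res}$ are independent, $\mathbb P(Q_{ON\text{-}IDLE}=n)=(1-\rho)\rho^n$ ($n\ge0$), and $\mathbb P(Q_{Res}=i)=p_{c-1,i}$ ($i\ge0$).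
   Context: The chain models an M/M/$c$ queue with setup times under the ON-OFF policy: $C$ is the number of busy servers and $N$ the number of jobs in the system in steady state; arrivals Poisson($\lambda$), services exp($\mu$), setups exp($\alpha$). Note $p_{c-1,i}=\mathbb P(N-C>i\mid C=c-1)/\mathbb E[N-C\mid C=c-1]$. *)

theory Defs
  imports "HOL-Analysis.Analysis"
begin

text \<open>State space of the M/M/c setup-time chain: states (i,j) with 0 <= i <= c, j >= i,
  where i = number of busy servers, j = number of jobs.\<close>
definition setup_states :: "nat \<Rightarrow> (nat \<times> nat) set" where
  "setup_states c = {(i, j). i \<le> c \<and> i \<le> j}"

definition setup_rate :: "nat \<Rightarrow> real \<Rightarrow> real \<Rightarrow> real \<Rightarrow> nat \<times> nat \<Rightarrow> nat \<times> nat \<Rightarrow> real" where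
  "setup_rate c lam mu alpha s t =
     (case s of (i, j) \<Rightarrow> case t of (i', j') \<Rightarrow>
        (if i' = i \<and> j' = j + 1 then lam else 0)
      + (if i < c \<and> i < j \<and> i' = i + 1 \<and> j' = j then real (min (j - i) (c - i)) * alpha else 0)
      + (if 1 \<le> i \<and> i < j \<and> i' = i \<and> j' = j - 1 then real i * mu else 0)
      + (if 1 \<le> i \<and> j = i \<and> i' = i - 1 \<and> j' = i - 1 then real i * mu else 0))"

definition setup_stationary :: "nat \<Rightarrow> real \<Rightarrow> real \<Rightarrow> real \<Rightarrow> (nat \<times> nat \<Rightarrow> real) \<Rightarrow> bool" where
  "setup_stationary c lam mu alpha st \<longleftrightarrow>
     (\<forall>s\<in>setup_states c. 0 \<le> st s) \<and>
     (st has_sum 1) (setup_states c) \<and>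
     (\<forall>t\<in>setup_states c.
        st t * (\<Sum>\<^sub>\<infinity>u\<in>setup_states c - {t}. setup_rate c lam mu alpha t u)
        = (\<Sum>\<^sub>\<infinity>s\<in>setup_states c - {t}. st s * setup_rate c lam mu alpha s t))"

end

theory Submission
  imports Defs
begin

text \<open>Write \<open>a k = \<pi>(c, c + k)\<close> for the top row and \<open>b m = \<pi>(c - 1, c - 1 + m)\<close> for the row
  below it, and \<open>T k\<close> for the sum of the \<open>b m\<close> with \<open>m > k\<close>. The balance equations of the top row
  telescope into the cut equation \<open>c\<mu> a k = \<lambda> a (k - 1) + \<alpha> T k\<close>, the flow balance of the set of
  states \<open>(c, j)\<close> with \<open>j \<ge> c + k\<close>. Solving this first-order recursion writes \<open>a\<close> as the
  convolution of the geometric weights \<open>(\<lambda>/c\<mu>)\<^sup>n\<close> with \<open>T\<close>. Summing the cut equation gives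
  \<open>\<alpha> \<Sum>T = (c\<mu> - \<lambda>) \<Sum>a\<close>, and \<open>\<Sum>T\<close> is the first moment of \<open>b\<close>, so both factors normalise
  to probability distributions. The generating function identity is then the Cauchy product
  of the two power series.\<close>

lemma infsum_atLeast_eq_sums:
  fixes f :: "nat \<Rightarrow> real"
  assumes "\<And>k. n \<le> k \<Longrightarrow> 0 \<le> f k" and "(\<lambda>m. f (m + n)) sums S"
  shows "(\<Sum>\<^sub>\<infinity>k\<in>{n..}. f k) = S"
proof -
  have "{n..} = (\<lambda>m. m + n) ` UNIV"
    by (auto simp: image_iff intro: le_add_diff_inverse2[symmetric])
  then have "(\<Sum>\<^sub>\<infinity>k\<in>{n..}. f k) = (\<Sum>\<^sub>\<infinity>m. f (m + n))"
    by (simp add: infsum_reindex inj_on_def o_def)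
  also have "\<dots> = S" using assms by (intro infsumI sums_nonneg_imp_has_sum) auto
  finally show ?thesis .
qed

lemma infsum_eq_sum_on_support:
  assumes "finite F" "F \<subseteq> A" "\<And>x. x \<in> A - F \<Longrightarrow> g x = 0"
  shows "infsum g A = sum g F"
  using infsum_cong_neutral[of F A g g] assms by auto

definition tail_sum :: "(nat \<Rightarrow> real) \<Rightarrow> nat \<Rightarrow> real" where
  "tail_sum b k = (\<Sum>m. b (m + Suc k))"

lemma tail_sum_nonneg:
  assumes "summable b" and "\<And>m. 0 \<le> b m"
  shows "0 \<le> tail_sum b k"
  unfolding tail_sum_def using summable_ignore_initial_segment[OF assms(1)] assms(2) by (rule suminf_nonneg)

lemma tail_sum_Suc:
  assumes "summable b"
  shows "tail_sum b k = b (Suc k) + tail_sum b (Suc k)"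
  using suminf_split_head[OF summable_ignore_initial_segment[OF assms, of "Suc k"]]
  by (simp add: tail_sum_def)

lemma tail_sum_LIMSEQ_zero:
  assumes "summable b"
  shows "tail_sum b \<longlonglongrightarrow> 0"
proof -
  have "tail_sum b k = suminf b - (\<Sum>i<Suc k. b i)" for k
    using suminf_split_initial_segment[OF assms, of "Suc k"] by (simp add: tail_sum_def)
  then have "tail_sum b = (\<lambda>k. suminf b - (\<Sum>i<Suc k. b i))" by (simp add: fun_eq_iff)
  moreover have "(\<lambda>k. suminf b - (\<Sum>i<Suc k. b i)) \<longlonglongrightarrow> suminf b - suminf b"
    using LIMSEQ_Suc[OF summable_LIMSEQ[OF assms]] by (intro tendsto_intros)
  ultimately show ?thesis by simp
qed

lemma infsum_atLeast_Suc_eq_tail_sum: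
  fixes b :: "nat \<Rightarrow> real"
  assumes "\<And>m. 0 \<le> b m" "summable b"
  shows "(\<Sum>\<^sub>\<infinity>k\<in>{i + 1..}. b k) = tail_sum b i"
  using assms summable_sums[OF summable_ignore_initial_segment[OF \<open>summable b\<close>, of "Suc i"]]
  by (intro infsum_atLeast_eq_sums) (simp_all add: tail_sum_def)

lemma tail_sum_sums_moment:
  fixes b :: "nat \<Rightarrow> real"
  assumes b_nonneg: "\<And>m. 0 \<le> b m" and "summable b" and tails: "summable (tail_sum b)"
  shows "(\<lambda>m. real (m + 1) * b (m + 1)) sums suminf (tail_sum b)"
proof -
  define e where "e m = real (m + 1) * b (m + 1)" for m
  have e_nonneg: "0 \<le> e m" for m by (simp add: e_def b_nonneg)
  have T_nonneg: "0 \<le> tail_sum b k" for k by (rule tail_sum_nonneg[OF \<open>summable b\<close> b_nonneg])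
  have partial: "(\<Sum>k<n. tail_sum b k) = (\<Sum>m<n. e m) + real n * tail_sum b n" for n
  proof (induction n)
    case (Suc n)
    then show ?case using tail_sum_Suc[OF \<open>summable b\<close>, of n] by (simp add: e_def algebra_simps)
  qed simp
  have e_le: "(\<Sum>m<n. e m) \<le> suminf (tail_sum b)" for n
  proof -
    have "(\<Sum>m<n. e m) \<le> (\<Sum>k<n. tail_sum b k)" using partial T_nonneg by simp
    also have "\<dots> \<le> suminf (tail_sum b)" by (rule sum_le_suminf[OF tails]) (auto simp: T_nonneg)
    finally show ?thesis .
  qed
  have "summable e" by (rule summableI_nonneg_bounded[OF e_nonneg e_le])
  have remainder: "real n * tail_sum b n \<le> (\<Sum>j. e (j + n))" for n
  proof -
    have "real n * tail_sum b n = (\<Sum>j. real n * b (j + Suc n))"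
      unfolding tail_sum_def by (rule suminf_mult[OF summable_ignore_initial_segment[OF \<open>summable b\<close>], symmetric])
    also have "\<dots> \<le> (\<Sum>j. e (j + n))"
    proof (rule suminf_le)
      show "summable (\<lambda>j. real n * b (j + Suc n))" by (rule summable_mult[OF summable_ignore_initial_segment[OF \<open>summable b\<close>]])
      show "summable (\<lambda>j. e (j + n))" by (rule summable_ignore_initial_segment[OF \<open>summable e\<close>])
    qed (simp add: e_def b_nonneg mult_right_mono)
    finally show ?thesis .
  qed
  have "suminf (tail_sum b) \<le> suminf e"
  proof (rule suminf_le_const[OF tails])
    fix n
    have "(\<Sum>k<n. tail_sum b k) \<le> (\<Sum>m<n. e m) + (\<Sum>j. e (j + n))"
      using partial remainder by (simp add: add_left_mono)
    also have "\<dots> = suminf e" using suminf_split_initial_segment[OF \<open>summable e\<close>, of n] by simp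
    finally show "(\<Sum>k<n. tail_sum b k) \<le> suminf e" .
  qed
  moreover have "suminf e \<le> suminf (tail_sum b)" by (rule suminf_le_const[OF \<open>summable e\<close> e_le])
  ultimately have "e sums suminf (tail_sum b)" using \<open>summable e\<close> by (simp add: sums_iff)
  then show ?thesis by (simp only: e_def[abs_def])
qed

text \<open>The difference of the two sides is constant in k by the balance equations, and tends to 0.\<close>
lemma cut_equation_of_balance:
  fixes a b :: "nat \<Rightarrow> real"
  assumes "summable a" "summable b"
    and bal_0: "(lam + r) * a 0 = al * b 1 + r * a 1"
    and bal_Suc: "\<And>k. (lam + r) * a (Suc k) = lam * a k + al * b (k + 2) + r * a (k + 2)"
  shows "r * a k = (if k = 0 then 0 else lam * a (k - 1)) + al * tail_sum b k"
proof -
  define D where "D k = r * a k - (if k = 0 then 0 else lam * a (k - 1)) - al * tail_sum b k" for k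
  have "D (Suc k) = D k" for k
  proof (cases k)
    case 0
    then show ?thesis using bal_0 tail_sum_Suc[OF \<open>summable b\<close>, of 0] by (simp add: D_def algebra_simps)
  next
    case (Suc j)
    then show ?thesis using bal_Suc[of j] tail_sum_Suc[OF \<open>summable b\<close>, of k] by (simp add: D_def algebra_simps)
  qed
  then have D_const: "D k = D 0" for k by (induction k) simp_all
  have "(\<lambda>k. r * a (Suc k) - lam * a k - al * tail_sum b (Suc k)) \<longlonglongrightarrow> r * 0 - lam * 0 - al * 0"
    using summable_LIMSEQ_zero[OF \<open>summable a\<close>] tail_sum_LIMSEQ_zero[OF \<open>summable b\<close>]
    by (intro tendsto_intros) (simp_all add: LIMSEQ_Suc)
  then have "(\<lambda>k. D (Suc k)) \<longlonglongrightarrow> 0" by (simp add: D_def)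
  moreover have "(\<lambda>k. D (Suc k)) = (\<lambda>_. D 0)" by (rule ext) (rule D_const)
  ultimately have "D 0 = 0" by (simp add: LIMSEQ_const_iff)
  with D_const[of k] have "D k = 0" by simp
  then show ?thesis by (simp add: D_def)
qed

lemma first_order_recursion_solution:
  fixes a g :: "nat \<Rightarrow> real"
  assumes "r \<noteq> 0" and rec: "\<And>k. r * a k = (if k = 0 then 0 else lam * a (k - 1)) + g k"
  shows "a k = (\<Sum>n\<le>k. (lam / r) ^ n * g (k - n) / r)"
proof (induction k)
  case 0
  then show ?case using rec[of 0] \<open>r \<noteq> 0\<close> by (simp add: field_simps)
next
  case (Suc k)
  have "a (Suc k) = lam / r * a k + g (Suc k) / r"
    using rec[of "Suc k"] \<open>r \<noteq> 0\<close> by (simp add: field_simps)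
  also have "\<dots> = (\<Sum>n\<le>k. (lam / r) ^ Suc n * g (Suc k - Suc n) / r) + g (Suc k) / r"
    by (simp add: Suc sum_distrib_left mult.assoc)
  also have "\<dots> = (\<Sum>n\<le>Suc k. (lam / r) ^ n * g (Suc k - n) / r)"
    by (subst sum.atMost_Suc_shift) simp
  finally show ?case .
qed

lemma sums_of_first_order_recursion:
  fixes a g :: "nat \<Rightarrow> real"
  assumes "summable a" and rec: "\<And>k. r * a k = (if k = 0 then 0 else lam * a (k - 1)) + g k"
  shows "g sums ((r - lam) * suminf a)"
proof -
  define shifted where "shifted k = (if k = 0 then 0 else a (k - 1))" for k
  have "(\<lambda>k. shifted (Suc k)) sums suminf a"
    using summable_sums[OF \<open>summable a\<close>] by (simp add: shifted_def)
  then have "shifted sums (suminf a + shifted 0)" by (rule sums_Suc_iff[THEN iffD1])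
  then have "shifted sums suminf a" by (simp add: shifted_def)
  then have "(\<lambda>k. r * a k - lam * shifted k) sums (r * suminf a - lam * suminf a)"
    using summable_sums[OF \<open>summable a\<close>] by (intro sums_diff sums_mult)
  moreover have "(\<lambda>k. r * a k - lam * shifted k) = g"
    using rec by (auto simp: fun_eq_iff shifted_def)
  ultimately show ?thesis by (simp add: algebra_simps)
qed

lemma geometric_decomposition_of_cut_equation:
  fixes a b :: "nat \<Rightarrow> real"
  assumes a_nonneg: "\<And>k. 0 \<le> a k" and b_nonneg: "\<And>k. 0 \<le> b k"
    and "summable a" "summable b" "\<exists>k. a k \<noteq> 0"
    and "0 < lam" "lam < r" "0 < al"
    and cut: "\<And>k. r * a k = (if k = 0 then 0 else lam * a (k - 1)) + al * tail_sum b k"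
  defines "M \<equiv> suminf (tail_sum b)"
  shows "0 < M"
    and "(\<lambda>m. real (m + 1) * b (m + 1)) sums M"
    and "(\<lambda>i. tail_sum b i / M) sums 1"
    and "a k / suminf a = (\<Sum>n\<le>k. (1 - lam / r) * (lam / r) ^ n * (tail_sum b (k - n) / M))"
proof -
  have "suminf a \<noteq> 0" using suminf_eq_zero_iff[OF \<open>summable a\<close> a_nonneg] \<open>\<exists>k. a k \<noteq> 0\<close> by blast
  then have a_pos: "0 < suminf a" using suminf_nonneg[OF \<open>summable a\<close> a_nonneg] by linarith
  have "(\<lambda>k. al * tail_sum b k) sums ((r - lam) * suminf a)"
    by (rule sums_of_first_order_recursion[OF \<open>summable a\<close> cut])
  then have T_sums: "tail_sum b sums ((r - lam) * suminf a / al)"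
    using \<open>0 < al\<close> by (simp add: sums_mult_D)
  then have M_eq: "M = (r - lam) * suminf a / al" by (simp add: M_def sums_iff)
  show "0 < M" unfolding M_eq using a_pos \<open>lam < r\<close> \<open>0 < al\<close> by simp
  show "(\<lambda>m. real (m + 1) * b (m + 1)) sums M"
    unfolding M_def using T_sums by (intro tail_sum_sums_moment b_nonneg \<open>summable b\<close>) (simp add: sums_iff)
  show "(\<lambda>i. tail_sum b i / M) sums 1"
    using sums_divide[OF T_sums[folded M_eq], of M] a_pos \<open>lam < r\<close> \<open>0 < al\<close> by (simp add: M_eq)
  have "a k = (\<Sum>n\<le>k. (lam / r) ^ n * (al * tail_sum b (k - n)) / r)"
    using \<open>0 < lam\<close> \<open>lam < r\<close> by (intro first_order_recursion_solution cut) simp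
  also have "\<dots> = suminf a * (\<Sum>n\<le>k. (1 - lam / r) * (lam / r) ^ n * (tail_sum b (k - n) / M))"
    unfolding sum_distrib_left using \<open>0 < lam\<close> \<open>lam < r\<close> \<open>0 < al\<close> a_pos
    by (intro sum.cong refl) (simp add: M_eq field_simps)
  finally show "a k / suminf a = (\<Sum>n\<le>k. (1 - lam / r) * (lam / r) ^ n * (tail_sum b (k - n) / M))"
    using a_pos by (simp add: field_simps)
qed

lemma power_series_norm_summable:
  fixes f :: "nat \<Rightarrow> real" and z :: complex
  assumes "\<And>k. 0 \<le> f k" "summable f" "norm z \<le> 1"
  shows "summable (\<lambda>k. norm (of_real (f k) * z ^ k))"
  by (rule summable_comparison_test'[OF \<open>summable f\<close>])
     (use assms in \<open>auto simp: norm_mult norm_power intro!: mult_left_le power_le_one\<close>)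

lemma power_series_sums_infsum:
  fixes f :: "nat \<Rightarrow> real" and z :: complex
  assumes "\<And>k. 0 \<le> f k" "summable f" "norm z \<le> 1"
  shows "(\<lambda>k. of_real (f k) * z ^ k) sums (\<Sum>\<^sub>\<infinity>k. of_real (f k) * z ^ k)"
  using norm_summable_imp_summable_on[OF power_series_norm_summable[OF assms]]
  by (intro has_sum_imp_sums has_sum_infsum)

lemma infsum_power_series_Cauchy_product:
  fixes f g :: "nat \<Rightarrow> real" and z :: complex
  assumes "\<And>k. 0 \<le> f k" "summable f" "\<And>k. 0 \<le> g k" "summable g" "norm z \<le> 1"
  shows "(\<Sum>\<^sub>\<infinity>k. of_real (\<Sum>i\<le>k. f i * g (k - i)) * z ^ k)
    = (\<Sum>\<^sub>\<infinity>k. of_real (f k) * z ^ k) * (\<Sum>\<^sub>\<infinity>k. of_real (g k) * z ^ k)"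
proof -
  define h where "h k = (\<Sum>i\<le>k. f i * g (k - i))" for k
  have "0 \<le> h k" for k unfolding h_def using assms by (simp add: sum_nonneg)
  moreover have "summable h"
    using summable_Cauchy_product[of f g] assms by (simp add: h_def[abs_def])
  ultimately have "(\<lambda>k. of_real (h k) * z ^ k) sums (\<Sum>\<^sub>\<infinity>k. of_real (h k) * z ^ k)"
    using \<open>norm z \<le> 1\<close> by (rule power_series_sums_infsum)
  moreover have "(\<lambda>k. \<Sum>i\<le>k. of_real (f i) * z ^ i * (of_real (g (k - i)) * z ^ (k - i)))
      sums ((\<Sum>k. of_real (f k) * z ^ k) * (\<Sum>k. of_real (g k) * z ^ k))"
    using assms by (intro Cauchy_product_sums power_series_norm_summable)
  moreover have "(\<Sum>i\<le>k. of_real (f i) * z ^ i * (of_real (g (k - i)) * z ^ (k - i))) = of_real (h k) * z ^ k" for k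
    unfolding h_def of_real_sum sum_distrib_right
    by (intro sum.cong refl) (simp add: power_add[symmetric])
  moreover have "(\<Sum>k. of_real (f k) * z ^ k) = (\<Sum>\<^sub>\<infinity>k. of_real (f k) * z ^ k)"
    "(\<Sum>k. of_real (g k) * z ^ k) = (\<Sum>\<^sub>\<infinity>k. of_real (g k) * z ^ k)"
    using power_series_sums_infsum[OF assms(1,2,5)] power_series_sums_infsum[OF assms(3,4,5)]
    by (simp_all add: sums_iff)
  ultimately show ?thesis by (simp add: h_def sums_unique2)
qed

lemma infsum_geometric_power_series:
  fixes \<rho> :: real and z :: complex
  assumes "0 \<le> \<rho>" "\<rho> < 1" "norm z \<le> 1"
  shows "(\<Sum>\<^sub>\<infinity>n. of_real ((1 - \<rho>) * \<rho> ^ n) * z ^ n) = (1 - of_real \<rho>) / (1 - of_real \<rho> * z)"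
proof -
  have "norm (of_real \<rho> * z) < 1"
    using assms by (simp add: norm_mult) (meson le_less_trans mult_left_le order_refl)
  then have "(\<lambda>n. (1 - of_real \<rho>) * (of_real \<rho> * z) ^ n) sums ((1 - of_real \<rho>) * (1 / (1 - of_real \<rho> * z)))"
    by (intro sums_mult geometric_sums)
  then have "(\<lambda>n. of_real ((1 - \<rho>) * \<rho> ^ n) * z ^ n) sums ((1 - of_real \<rho>) / (1 - of_real \<rho> * z))"
    by (simp add: power_mult_distrib mult.assoc)
  moreover have "(\<lambda>n. of_real ((1 - \<rho>) * \<rho> ^ n) * z ^ n) sums (\<Sum>\<^sub>\<infinity>n. of_real ((1 - \<rho>) * \<rho> ^ n) * z ^ n)"
    using assms by (intro power_series_sums_infsum summable_mult summable_geometric) simp_all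
  ultimately show ?thesis by (simp add: sums_unique2)
qed

lemma infsum_power_series_geometric_convolution:
  fixes P q :: "nat \<Rightarrow> real" and \<rho> :: real and z :: complex
  assumes "0 \<le> \<rho>" "\<rho> < 1" "\<And>i. 0 \<le> q i" "summable q" "norm z \<le> 1"
    and P: "\<And>k. P k = (\<Sum>n\<le>k. (1 - \<rho>) * \<rho> ^ n * q (k - n))"
  shows "(\<Sum>\<^sub>\<infinity>k. of_real (P k) * z ^ k) = (\<Sum>\<^sub>\<infinity>i. of_real (q i) * z ^ i) * (1 - of_real \<rho>) / (1 - of_real \<rho> * z)"
proof -
  have "(\<Sum>\<^sub>\<infinity>k. of_real (P k) * z ^ k)
      = (\<Sum>\<^sub>\<infinity>n. of_real ((1 - \<rho>) * \<rho> ^ n) * z ^ n) * (\<Sum>\<^sub>\<infinity>i. of_real (q i) * z ^ i)"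
    unfolding P using assms by (intro infsum_power_series_Cauchy_product) simp_all
  then show ?thesis using infsum_geometric_power_series[OF assms(1,2,5)] by simp
qed

lemma setup_rate_nonneg:
  assumes "0 \<le> lam" "0 \<le> mu" "0 \<le> alpha"
  shows "0 \<le> setup_rate c lam mu alpha s t"
  using assms unfolding setup_rate_def by (auto split: prod.splits)

lemma setup_rate_source:
  assumes "setup_rate c lam mu alpha s (i, j) \<noteq> 0"
  shows "s \<in> {(i, j - 1), (i - 1, j), (i, j + 1), (i + 1, i + 1)}"
  using assms unfolding setup_rate_def by (auto split: prod.splits if_splits)

lemma setup_outflow_top_row:
  assumes "1 \<le> c"
  shows "(\<Sum>\<^sub>\<infinity>u\<in>setup_states c - {(c, c + k)}. setup_rate c lam mu alpha (c, c + k) u) = lam + real c * mu"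
proof -
  define down where "down = (if k = 0 then (c - 1, c - 1) else (c, c + k - 1))"
  have "(\<Sum>\<^sub>\<infinity>u\<in>setup_states c - {(c, c + k)}. setup_rate c lam mu alpha (c, c + k) u)
      = sum (setup_rate c lam mu alpha (c, c + k)) {(c, c + k + 1), down}"
    using assms by (intro infsum_eq_sum_on_support)
      (auto simp: down_def setup_states_def setup_rate_def split: if_splits)
  also have "\<dots> = lam + real c * mu" using assms by (auto simp: down_def setup_rate_def)
  finally show ?thesis .
qed

lemma setup_inflow_top_row:
  assumes "1 \<le> c"
  shows "(\<Sum>\<^sub>\<infinity>s\<in>setup_states c - {(c, c + k)}. st s * setup_rate c lam mu alpha s (c, c + k))
     = (if k = 0 then 0 else lam * st (c, c + k - 1)) + alpha * st (c - 1, c + k) + real c * mu * st (c, c + k + 1)"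
proof -
  define F where "F = {(c - 1, c + k), (c, c + k + 1)} \<union> (if k = 0 then {} else {(c, c + k - 1)})"
  have "setup_rate c lam mu alpha s (c, c + k) = 0" if "s \<in> setup_states c - {(c, c + k)} - F" for s
  proof (rule ccontr)
    assume "setup_rate c lam mu alpha s (c, c + k) \<noteq> 0"
    from setup_rate_source[OF this] that show False by (cases "k = 0") (auto simp: F_def setup_states_def)
  qed
  then have "(\<Sum>\<^sub>\<infinity>s\<in>setup_states c - {(c, c + k)}. st s * setup_rate c lam mu alpha s (c, c + k))
      = (\<Sum>s\<in>F. st s * setup_rate c lam mu alpha s (c, c + k))"
    using assms by (intro infsum_eq_sum_on_support) (auto simp: F_def setup_states_def)
  also have "\<dots> = (if k = 0 then 0 else lam * st (c, c + k - 1)) + alpha * st (c - 1, c + k) + real c * mu * st (c, c + k + 1)"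
    using assms by (auto simp: F_def setup_rate_def)
  finally show ?thesis .
qed

lemma setup_stationary_nonneg:
  assumes "setup_stationary c lam mu alpha st" "i \<le> c" "i \<le> j"
  shows "0 \<le> st (i, j)"
  using assms by (simp add: setup_stationary_def setup_states_def)

lemma setup_stationary_row_summable:
  assumes stat: "setup_stationary c lam mu alpha st" and "i \<le> c"
  shows "summable (\<lambda>k. st (i, i + k))"
proof -
  have "st summable_on setup_states c" using stat by (auto simp: setup_stationary_def summable_on_def)
  then have "st summable_on (\<lambda>k. (i, i + k)) ` UNIV"
    by (rule summable_on_subset_banach) (auto simp: setup_states_def \<open>i \<le> c\<close>)
  then have "(\<lambda>k. st (i, i + k)) summable_on UNIV"
    by (subst (asm) summable_on_reindex) (auto simp: inj_on_def o_def)
  then show ?thesis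
    using summable_on_UNIV_nonneg_real_iff setup_stationary_nonneg[OF stat \<open>i \<le> c\<close>] by simp
qed

lemma setup_stationary_top_row_cut:
  assumes "1 \<le> c" and stat: "setup_stationary c lam mu alpha st"
  shows "real c * mu * st (c, c + k)
    = (if k = 0 then 0 else lam * st (c, c + (k - 1))) + alpha * tail_sum (\<lambda>m. st (c - 1, c - 1 + m)) k"
proof (rule cut_equation_of_balance)
  have balance: "st (c, c + k) * (lam + real c * mu)
      = (if k = 0 then 0 else lam * st (c, c + k - 1)) + alpha * st (c - 1, c + k) + real c * mu * st (c, c + k + 1)" for k
  proof -
    have "(c, c + k) \<in> setup_states c" by (simp add: setup_states_def)
    with stat have "st (c, c + k) * (\<Sum>\<^sub>\<infinity>u\<in>setup_states c - {(c, c + k)}. setup_rate c lam mu alpha (c, c + k) u)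
        = (\<Sum>\<^sub>\<infinity>s\<in>setup_states c - {(c, c + k)}. st s * setup_rate c lam mu alpha s (c, c + k))"
      unfolding setup_stationary_def by blast
    then show ?thesis
      unfolding setup_outflow_top_row[OF \<open>1 \<le> c\<close>] setup_inflow_top_row[OF \<open>1 \<le> c\<close>] .
  qed
  show "(lam + real c * mu) * st (c, c + 0) = alpha * st (c - 1, c - 1 + 1) + real c * mu * st (c, c + 1)"
    using balance[of 0] \<open>1 \<le> c\<close> by (simp add: algebra_simps)
  show "(lam + real c * mu) * st (c, c + Suc k)
      = lam * st (c, c + k) + alpha * st (c - 1, c - 1 + (k + 2)) + real c * mu * st (c, c + (k + 2))" for k
    using balance[of "Suc k"] \<open>1 \<le> c\<close> by (simp add: algebra_simps)
qed (use setup_stationary_row_summable[OF stat] in auto)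

text \<open>The inflow into a state of mass 0 is a sum of nonnegative terms with value 0.\<close>
lemma setup_stationary_zero_at_source:
  assumes stat: "setup_stationary c lam mu alpha st"
    and "0 \<le> lam" "0 \<le> mu" "0 \<le> alpha"
    and t: "t \<in> setup_states c" "st t = 0"
    and s: "s \<in> setup_states c" "s \<noteq> t" "0 < setup_rate c lam mu alpha s t"
  shows "st s = 0"
proof -
  obtain i j where t_eq: "t = (i, j)" by (cases t)
  define inflow where "inflow s = st s * setup_rate c lam mu alpha s t" for s
  have "infsum inflow (setup_states c - {t}) = 0"
    using stat t unfolding setup_stationary_def inflow_def by auto
  moreover have "{x \<in> setup_states c - {t}. inflow x \<noteq> 0} \<subseteq> {(i, j - 1), (i - 1, j), (i, j + 1), (i + 1, i + 1)}"
    using setup_rate_source[of c lam mu alpha _ i j] by (auto simp: inflow_def t_eq)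
  then have "inflow summable_on (setup_states c - {t})"
    by (intro finite_nonzero_values_imp_summable_on) (auto intro: finite_subset)
  moreover have "0 \<le> inflow x" if "x \<in> setup_states c - {t}" for x
    using that stat assms(2-4) by (auto simp: inflow_def setup_stationary_def intro!: mult_nonneg_nonneg setup_rate_nonneg)
  ultimately have "inflow s = 0" using s by (intro nonneg_infsum_le_0D[of inflow "setup_states c - {t}"]) auto
  then show ?thesis using s by (simp add: inflow_def)
qed

text \<open>If the top row carried no mass, the mass 0 would propagate downwards through setups
  and arrivals to every row, contradicting total mass 1.\<close>
lemma setup_stationary_top_row_nonzero:
  assumes stat: "setup_stationary c lam mu alpha st" and "0 < lam" "0 < mu" "0 < alpha"
  shows "\<exists>k. st (c, c + k) \<noteq> 0"
proof (rule ccontr)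
  assume "\<not> (\<exists>k. st (c, c + k) \<noteq> 0)"
  then have top: "st (c, c + k) = 0" for k by simp
  note zero_at_source = setup_stationary_zero_at_source[OF stat less_imp_le[OF \<open>0 < lam\<close>]
      less_imp_le[OF \<open>0 < mu\<close>] less_imp_le[OF \<open>0 < alpha\<close>]]
  have "\<forall>j\<ge>i. st (i, j) = 0" if "i \<le> c" for i
    using that
  proof (induction rule: inc_induct)
    case base
    show ?case using top by (metis le_iff_add)
  next
    case (step i)
    have above: "st (i, j) = 0" if "i < j" for j
    proof (rule zero_at_source)
      show "(i + 1, j) \<in> setup_states c" "(i, j) \<in> setup_states c"
        using that step.hyps by (auto simp: setup_states_def)
      show "st (i + 1, j) = 0" using step.IH that by simp
      have "0 < real (min (j - i) (c - i))" using that step.hyps by simp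
      then show "0 < setup_rate c lam mu alpha (i, j) (i + 1, j)"
        using that step.hyps \<open>0 < alpha\<close> by (simp add: setup_rate_def)
    qed simp
    have "st (i, i) = 0"
    proof (rule zero_at_source)
      show "(i, i + 1) \<in> setup_states c" "(i, i) \<in> setup_states c"
        using step.hyps by (auto simp: setup_states_def)
      show "st (i, i + 1) = 0" using above by simp
      show "0 < setup_rate c lam mu alpha (i, i) (i, i + 1)"
        using \<open>0 < lam\<close> by (simp add: setup_rate_def)
    qed simp
    with above show ?case by (auto simp: le_less)
  qed
  then have "(st has_sum 0) (setup_states c)"
    by (intro has_sum_0) (auto simp: setup_states_def)
  moreover have "(st has_sum 1) (setup_states c)" using stat by (simp add: setup_stationary_def)
  ultimately show False using has_sum_unique by fastforce
qed

lemma setup_stationary_top_row_convolution: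
  assumes "1 \<le> c" "0 < lam" "0 < mu" "0 < alpha" "lam < real c * mu"
    and stat: "setup_stationary c lam mu alpha st"
  defines "p \<equiv> \<lambda>i. (\<Sum>\<^sub>\<infinity>k\<in>{i + 1..}. st (c - 1, c - 1 + k)) / (\<Sum>\<^sub>\<infinity>k\<in>{1::nat..}. real k * st (c - 1, c - 1 + k))"
  shows "\<And>i. 0 \<le> p i" and "p sums 1"
    and "\<And>k. st (c, c + k) / (\<Sum>\<^sub>\<infinity>j\<in>{c..}. st (c, j))
      = (\<Sum>n\<le>k. (1 - lam / (real c * mu)) * (lam / (real c * mu)) ^ n * p (k - n))"
proof -
  define b where "b m = st (c - 1, c - 1 + m)" for m
  define M where "M = suminf (tail_sum b)"
  have top_nonneg: "0 \<le> st (c, c + k)" for k using stat by (rule setup_stationary_nonneg) simp_all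
  have top_summable: "summable (\<lambda>k. st (c, c + k))" using stat by (rule setup_stationary_row_summable) simp
  have b_nonneg: "0 \<le> b m" for m unfolding b_def using stat by (rule setup_stationary_nonneg) simp_all
  have "summable b" unfolding b_def[abs_def] using stat by (rule setup_stationary_row_summable) simp
  note decomposition = geometric_decomposition_of_cut_equation
      [of "\<lambda>k. st (c, c + k)" b, folded M_def, OF top_nonneg b_nonneg top_summable \<open>summable b\<close>
       setup_stationary_top_row_nonzero[OF stat assms(2-4)] assms(2,5,4)
       setup_stationary_top_row_cut[OF assms(1) stat, folded b_def]]
  have "(\<Sum>\<^sub>\<infinity>k\<in>{1::nat..}. real k * st (c - 1, c - 1 + k)) = M"
    using decomposition(2) b_nonneg by (intro infsum_atLeast_eq_sums) (simp_all add: b_def)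
  moreover have "(\<Sum>\<^sub>\<infinity>k\<in>{i + 1..}. st (c - 1, c - 1 + k)) = tail_sum b i" for i
    using infsum_atLeast_Suc_eq_tail_sum[OF b_nonneg \<open>summable b\<close>] by (simp add: b_def)
  ultimately have p_eq: "p = (\<lambda>i. tail_sum b i / M)" by (simp add: p_def fun_eq_iff)
  show "0 \<le> p i" for i
    using decomposition(1) tail_sum_nonneg[OF \<open>summable b\<close> b_nonneg] by (simp add: p_eq)
  show "p sums 1" using decomposition(3) by (simp add: p_eq)
  have "(\<Sum>\<^sub>\<infinity>j\<in>{c..}. st (c, j)) = (\<Sum>k. st (c, c + k))"
    using summable_sums[OF top_summable] setup_stationary_nonneg[OF stat]
    by (intro infsum_atLeast_eq_sums) (simp_all add: add.commute)
  then show "st (c, c + k) / (\<Sum>\<^sub>\<infinity>j\<in>{c..}. st (c, j))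
      = (\<Sum>n\<le>k. (1 - lam / (real c * mu)) * (lam / (real c * mu)) ^ n * p (k - n))" for k
    using decomposition(4) by (simp add: p_eq)
qed

theorem mainTheorem3:
  fixes c :: nat and lam mu alpha :: real and st :: "nat \<times> nat \<Rightarrow> real"
  assumes "c \<ge> 1" and "lam > 0" and "mu > 0" and "alpha > 0"
    and "lam / (real c * mu) < 1"
    and "setup_stationary c lam mu alpha st"
  defines "PQ \<equiv> (\<lambda>k. st (c, c + k) / (\<Sum>\<^sub>\<infinity>j\<in>{c..}. st (c, j)))"
    and "p \<equiv> (\<lambda>i. (1 / (\<Sum>\<^sub>\<infinity>k\<in>{1::nat..}. real k * st (c - 1, c - 1 + k))) * (\<Sum>\<^sub>\<infinity>k\<in>{i + 1..}. st (c - 1, c - 1 + k)))"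
  shows "(\<forall>i. 0 \<le> p i) \<and> (p has_sum 1) UNIV
    \<and> (\<forall>z::complex. norm z \<le> 1 \<longrightarrow>
          (\<Sum>\<^sub>\<infinity>k. of_real (PQ k) * z ^ k)
            = (\<Sum>\<^sub>\<infinity>i. of_real (p i) * z ^ i) * (1 - of_real (lam / (real c * mu))) / (1 - of_real (lam / (real c * mu)) * z))
    \<and> (\<forall>k. PQ k = (\<Sum>n\<le>k. (1 - lam / (real c * mu)) * (lam / (real c * mu)) ^ n * p (k - n)))"
proof -
  define \<rho> where "\<rho> = lam / (real c * mu)"
  have "0 < real c * mu" using assms(1,3) by simp
  then have "lam < real c * mu" "0 \<le> \<rho>" using assms(2,5) by (simp_all add: \<rho>_def field_simps)
  note convolution = setup_stationary_top_row_convolution[OF assms(1-4) \<open>lam < real c * mu\<close> assms(6)]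
  have p_nonneg: "\<forall>i. 0 \<le> p i" and "p sums 1"
    using convolution(1,2) by (simp_all add: p_def)
  have conv: "\<forall>k. PQ k = (\<Sum>n\<le>k. (1 - \<rho>) * \<rho> ^ n * p (k - n))"
    using convolution(3) by (simp add: PQ_def p_def \<rho>_def)
  have "(\<Sum>\<^sub>\<infinity>k. of_real (PQ k) * z ^ k) = (\<Sum>\<^sub>\<infinity>i. of_real (p i) * z ^ i) * (1 - of_real \<rho>) / (1 - of_real \<rho> * z)"
    if "norm z \<le> 1" for z :: complex
    using \<open>0 \<le> \<rho>\<close> assms(5) p_nonneg sums_summable[OF \<open>p sums 1\<close>] that conv
    by (intro infsum_power_series_geometric_convolution) (simp_all add: \<rho>_def)
  then show ?thesis
    using p_nonneg sums_nonneg_imp_has_sum[OF \<open>p sums 1\<close>] conv by (simp add: \<rho>_def)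
qed

end
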